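(* Let $T$ be a string, let $1\le j\le |T|$, $1\le i\le j+1$, let $w$ be a string, and let $L=T[1..i-1]$, $R=T[j+1..|T|]$ and $T'=LwR$. Assume $|L|\ge |R|$, $|w|\le |L|/2$, and that the longest border of $Lw$ is longer than $|w|$. Partition the set of borders of $Lw$ into groups $G_1,\dots,G_m$ so that two borders lie in the same group iff they have the same smallest period, and let $p_k$ be the common smallest period of the borders in $G_k$. Assume that $T'$ has a border longer than $R$, and let $b^\star$ be the border of $Lw$ such that $b^\star R$ is the longest border of $T'$; let $k^\star$ be the index of the group containing $b^\star$. Let $\alpha_{k^\star}$ be the exponent of the longest prefix of $T'$ having period $p_{k^\star}$. If $b^\star$ is periodic and $p_{k^\star}=\mathsf{per}(b^\star R)$, then $|b^\star|\le \alpha_{k^\star}p_{k^\star}-|R|$.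
   Context: $S[i..j]$ denotes the factor of $S$ from position $i$ to $j$ (empty if $i>j$). A border of a nonempty string $S$ is a string that is both a proper prefix and a proper suffix of $S$. If $S$ has a border $b$ then $|S|-|b|$ is a period of $S$; $\mathsf{per}(S)$ is the smallest period of $S$. The exponent of a string $S$ is the rational number $|S|/\mathsf{per}(S)$. $S$ is periodic if $\mathsf{per}(S)\le |S|/2$. A string $S$ has period $p$ if $S[t]=S[t+p]$ for all valid $t$. *)

theory Defs
  imports Complex_Main
begin

text \<open>Strings are lists; position t of a string (1-based in the paper) is index t-1 here.\<close>

definition is_border :: "'a list \<Rightarrow> 'a list \<Rightarrow> bool" where
  "is_border b S \<longleftrightarrow> S \<noteq> [] \<and> length b < length S \<and> take (length b) S = b \<and> drop (length S - length b) S = b"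

definition has_period :: "'a list \<Rightarrow> nat \<Rightarrow> bool" where
  "has_period S p \<longleftrightarrow> (\<forall>t. t + p < length S \<longrightarrow> S ! t = S ! (t + p))"

definition per :: "'a list \<Rightarrow> nat" where
  "per S = (LEAST p. 0 < p \<and> has_period S p)"

definition exponent :: "'a list \<Rightarrow> real" where
  "exponent S = real (length S) / real (per S)"

definition periodic :: "'a list \<Rightarrow> bool" where
  "periodic S \<longleftrightarrow> 2 * per S \<le> length S"

definition longest_border_len :: "'a list \<Rightarrow> nat" where
  "longest_border_len S = (GREATEST l. \<exists>b. is_border b S \<and> length b = l)"

definition longest_periodic_prefix :: "'a list \<Rightarrow> nat \<Rightarrow> 'a list" where
  "longest_periodic_prefix S p =
     take (GREATEST l. l \<le> length S \<and> has_period (take l S) p) S"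

end

theory Submission
  imports Defs
begin

text \<open>Since \<open>b\<^sup>\<star>R\<close> is a border of \<open>T'\<close>, it is a prefix of \<open>T'\<close>, and by hypothesis it has period
  \<open>p = per b\<^sup>\<star>\<close>. Hence the longest prefix \<open>Q\<close> of \<open>T'\<close> with period \<open>p\<close> has length at least
  \<open>|b\<^sup>\<star>| + |R|\<close>. As \<open>per Q \<le> p\<close>, the product of its exponent with \<open>p\<close> is at least \<open>|Q|\<close>.\<close>

lemma per_pos: "0 < per S"
  and has_period_per: "has_period S (per S)"
proof -
  have "0 < Suc (length S) \<and> has_period S (Suc (length S))"
    by (simp add: has_period_def)
  then have "0 < per S \<and> has_period S (per S)"
    unfolding per_def by (rule LeastI)
  then show "0 < per S" "has_period S (per S)" by auto
qed

lemma per_le_period: "0 < p \<Longrightarrow> has_period S p \<Longrightarrow> per S \<le> p"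
  unfolding per_def by (rule Least_le) simp

lemma length_le_exponent_mult_period:
  assumes "0 < p" "has_period S p"
  shows "real (length S) \<le> exponent S * real p"
proof -
  have "1 \<le> real p / real (per S)"
    using per_pos[of S] per_le_period[OF assms] by simp
  from mult_left_mono[OF this, of "real (length S)"]
  show ?thesis unfolding exponent_def by simp
qed

lemma
  assumes "take (length u) S = u" "has_period u p"
  shows length_le_longest_periodic_prefix: "length u \<le> length (longest_periodic_prefix S p)"
    and has_period_longest_periodic_prefix: "has_period (longest_periodic_prefix S p) p"
proof -
  define P where "P = (\<lambda>l. l \<le> length S \<and> has_period (take l S) p)"
  have lpp: "longest_periodic_prefix S p = take (GREATEST l. P l) S"
    unfolding longest_periodic_prefix_def P_def ..
  have "length u \<le> length S"
    using arg_cong[OF assms(1), of length] by simp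
  with assms have Pu: "P (length u)" unfolding P_def by simp
  have bounded: "\<And>l. P l \<Longrightarrow> l \<le> length S" unfolding P_def by simp
  have "P (GREATEST l. P l)" by (rule GreatestI_nat[where P=P, OF Pu bounded])
  moreover have "length u \<le> (GREATEST l. P l)" by (rule Greatest_le_nat[where P=P, OF Pu bounded])
  ultimately show "length u \<le> length (longest_periodic_prefix S p)"
    and "has_period (longest_periodic_prefix S p) p"
    unfolding lpp P_def by simp_all
qed

lemma periodic_prefix_le_exponent_mult_period:
  assumes "take (length u) S = u" "0 < p" "has_period u p"
  shows "real (length u) \<le> exponent (longest_periodic_prefix S p) * real p"
  using length_le_longest_periodic_prefix[OF assms(1,3)]
    length_le_exponent_mult_period[OF assms(2) has_period_longest_periodic_prefix[OF assms(1,3)]]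
  by linarith

theorem lemma9:
  fixes T w bs :: "'a list" and i j :: nat
  assumes "1 \<le> j" "j \<le> length T" "1 \<le> i" "i \<le> j + 1"
    and "length (take (i - 1) T) \<ge> length (drop j T)"
    and "2 * length w \<le> length (take (i - 1) T)"
    and "longest_border_len (take (i - 1) T @ w) > length w"
    and "\<exists>b. is_border b (take (i - 1) T @ w @ drop j T) \<and> length b > length (drop j T)"
    and "is_border bs (take (i - 1) T @ w)"
    and "is_border (bs @ drop j T) (take (i - 1) T @ w @ drop j T)"
    and "\<forall>c. is_border c (take (i - 1) T @ w @ drop j T) \<longrightarrow> length c \<le> length (bs @ drop j T)"
    and "periodic bs"
    and "per bs = per (bs @ drop j T)"
  shows "real (length bs) \<le>
           exponent (longest_periodic_prefix (take (i - 1) T @ w @ drop j T) (per bs)) * real (per bs)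
           - real (length (drop j T))"
proof -
  let ?S = "take (i - 1) T @ w @ drop j T" and ?u = "bs @ drop j T"
  have prefix: "take (length ?u) ?S = ?u"
    using assms(10) unfolding is_border_def by blast
  have period: "has_period ?u (per bs)"
    using assms(13) has_period_per by metis
  have "real (length ?u) \<le> exponent (longest_periodic_prefix ?S (per bs)) * real (per bs)"
    by (rule periodic_prefix_le_exponent_mult_period[OF prefix per_pos period])
  then show ?thesis by simp
qed

end
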